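(* Let $\nu > 0$. For each integer $m \ge 0$ let $(\widetilde S_m(k))_{k \ge 0}$ be a simple symmetric random walk ($\widetilde S_m(0)=0$, increments i.i.d. with $\Pr(\pm 1) = \tfrac12$), and let \[ Y_m = 2^{-2m} \sum_{k=0}^{\infty} \exp\bigl(2^{-m}\widetilde S_m(k) - \nu k 2^{-2m}\bigr). \] If $p$ is a positive integer with $\frac{p}{2} < \nu$, then \[ \lim_{m \to \infty} \mathbb{E}(Y_m^p) = \frac{1}{\prod_{k=1}^p \left(\nu - \frac{k}{2}\right)} < \infty . \] *)

theory Defs
  imports "HOL-Probability.Probability"
begin

definition walk :: "(nat \<Rightarrow> 'a \<Rightarrow> real) \<Rightarrow> nat \<Rightarrow> 'a \<Rightarrow> real" where
  "walk X k \<omega> = (\<Sum>i<k. X i \<omega>)"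

text \<open>Y_m as an extended nonnegative real (the series may diverge for small m).\<close>
definition Ysum :: "real \<Rightarrow> nat \<Rightarrow> (nat \<Rightarrow> 'a \<Rightarrow> real) \<Rightarrow> 'a \<Rightarrow> ennreal" where
  "Ysum \<nu> m X \<omega> = (\<Sum>k. ennreal (2 powr (- 2 * real m) *
       exp (2 powr (- real m) * walk X k \<omega> - \<nu> * real k * 2 powr (- 2 * real m))))"

end

theory Submission
  imports Defs "HOL-Real_Asymp.Real_Asymp"
begin

text \<open>
  With h = 2 powr -m and q = exp (-\<nu> h^2) we have Y_m = h^2 \<Sum>_k exp (h S(k)) q^k. The truncated
  sums F_n = \<Sum>_{k<n} exp (h S(k)) q^k satisfy F_{n+1} = 1 + q exp (h X_0) F'_n, where F'_n is built
  from the shifted walk, is independent of X_0 and has the law of F_n. Expanding binomially, the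
  moments E F_n^j obey a linear recursion with weights w(l) = q^l cosh (l h) = E (q exp (h X_0))^l.
  If w(l) < 1 for 1 \<le> l \<le> p, they increase to limits L(j) with
  (1 - w(j)) L(j) = \<Sum>_{l<j} (j choose l) w(l) L(l). As 1 - w(l) ~ (l \<nu> - l^2/2) h^2 for h \<rightarrow> 0,
  only the summand l = j - 1 survives in h^(2j) L(j), which therefore tends to j / (j \<nu> - j^2/2)
  times the limit of h^(2(j-1)) L(j-1).
\<close>

fun moment_iter :: "(nat \<Rightarrow> real) \<Rightarrow> nat \<Rightarrow> nat \<Rightarrow> real" where
  "moment_iter w 0 j = (if j = 0 then 1 else 0)"
| "moment_iter w (Suc n) j = (\<Sum>l\<le>j. real (j choose l) * w l * moment_iter w n l)"

lemma moment_iter_nonneg: "(\<And>l. 0 \<le> w l) \<Longrightarrow> 0 \<le> moment_iter w n j"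
  by (induction n arbitrary: j) (auto intro!: sum_nonneg mult_nonneg_nonneg)

lemma moment_iter_0_right: "w 0 = 1 \<Longrightarrow> moment_iter w n 0 = 1"
  by (induction n) auto

lemma moment_iter_Suc_0: "w 0 = 1 \<Longrightarrow> moment_iter w (Suc 0) j = 1"
  by (simp add: if_distrib sum.delta cong: if_cong)

lemma moment_iter_Suc_eq:
  "moment_iter w (Suc n) j = w j * moment_iter w n j + (\<Sum>l<j. real (j choose l) * w l * moment_iter w n l)"
  by (simp add: lessThan_Suc_atMost[symmetric])

lemma incseq_moment_iter:
  assumes w0: "w 0 = 1" and nonneg: "\<And>l. 0 \<le> w l"
  shows "incseq (\<lambda>n. moment_iter w n j)"
proof (rule incseq_SucI)
  show "moment_iter w n j \<le> moment_iter w (Suc n) j" for n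
  proof (induction n arbitrary: j)
    case 0
    show ?case using w0 by (simp only: moment_iter_Suc_0) simp
  next
    case (Suc n)
    show ?case
      unfolding moment_iter.simps(2)[of w "Suc n"] moment_iter.simps(2)[of w n]
      by (intro sum_mono mult_left_mono Suc mult_nonneg_nonneg nonneg) (use Suc in auto)
  qed
qed

definition moment_limit :: "(nat \<Rightarrow> real) \<Rightarrow> nat \<Rightarrow> real" where
  "moment_limit w j = lim (\<lambda>n. moment_iter w n j)"

lemma moment_iter_tendsto:
  fixes w :: "nat \<Rightarrow> real" and p j :: nat
  assumes w0: "w 0 = 1" and nonneg: "\<And>l. 0 \<le> w l"
    and less_one: "\<And>l. 1 \<le> l \<Longrightarrow> l \<le> p \<Longrightarrow> w l < 1"
  shows "j \<le> p \<Longrightarrow> (\<lambda>n. moment_iter w n j) \<longlonglongrightarrow> moment_limit w j"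
proof (induction j rule: less_induct)
  case (less j)
  note inc = incseq_moment_iter[where w=w, OF w0 nonneg]
  show ?case
  proof (cases "j = 0")
    case True
    then show ?thesis unfolding moment_limit_def by (simp add: moment_iter_0_right[where w=w, OF w0])
  next
    case False
    have below: "moment_iter w n l \<le> moment_limit w l" if "l < j" for l n
      using incseq_le[OF inc less.IH] that less.prems by simp
    define R where "R = (\<Sum>l<j. real (j choose l) * w l * moment_limit w l)"
    have "0 \<le> R"
      unfolding R_def using below[where n=0] moment_iter_nonneg[where w=w and n=0, OF nonneg]
      by (intro sum_nonneg mult_nonneg_nonneg nonneg) (auto intro: order_trans)
    have wj: "w j < 1" using less_one False less by auto
    text \<open>\<open>R / (1 - w j)\<close> is the fixed point of the affine map \<open>x \<mapsto> w j * x + R\<close> dominating the iteration.\<close>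
    have bounded: "moment_iter w n j \<le> R / (1 - w j)" for n
    proof (induction n)
      case 0
      then show ?case using False \<open>0 \<le> R\<close> wj by simp
    next
      case (Suc n)
      have "(\<Sum>l<j. real (j choose l) * w l * moment_iter w n l) \<le> R"
        unfolding R_def by (intro sum_mono mult_left_mono below mult_nonneg_nonneg nonneg) auto
      then have "moment_iter w (Suc n) j \<le> w j * (R / (1 - w j)) + R"
        unfolding moment_iter_Suc_eq by (intro add_mono mult_left_mono Suc nonneg)
      also have "\<dots> = R / (1 - w j)" using wj by (simp add: field_simps)
      finally show ?case .
    qed
    obtain L where "(\<lambda>n. moment_iter w n j) \<longlonglongrightarrow> L"
      using incseq_convergent[OF inc allI[OF bounded]] by blast
    then show ?thesis
      unfolding moment_limit_def using convergentI convergent_LIMSEQ_iff by blast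
  qed
qed

lemma moment_limit_eq:
  assumes w0: "w 0 = 1" and nonneg: "\<And>l. 0 \<le> w l"
    and less_one: "\<And>l. 1 \<le> l \<Longrightarrow> l \<le> p \<Longrightarrow> w l < 1" and "j \<le> p"
  shows "(1 - w j) * moment_limit w j = (\<Sum>l<j. real (j choose l) * w l * moment_limit w l)"
proof -
  note tendsto = moment_iter_tendsto[where w=w, OF w0 nonneg less_one]
  have "(\<lambda>n. moment_iter w (Suc n) j) \<longlonglongrightarrow> moment_limit w j"
    using tendsto \<open>j \<le> p\<close> LIMSEQ_Suc by blast
  moreover have "(\<lambda>n. moment_iter w (Suc n) j)
      \<longlonglongrightarrow> w j * moment_limit w j + (\<Sum>l<j. real (j choose l) * w l * moment_limit w l)"
    unfolding moment_iter_Suc_eq using \<open>j \<le> p\<close> by (intro tendsto_intros tendsto) auto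
  ultimately have "moment_limit w j = w j * moment_limit w j + (\<Sum>l<j. real (j choose l) * w l * moment_limit w l)"
    by (rule LIMSEQ_unique)
  then show ?thesis by (simp add: algebra_simps)
qed

lemma SUP_moment_iter:
  assumes "w 0 = 1" "\<And>l. 0 \<le> w l" "\<And>l. 1 \<le> l \<Longrightarrow> l \<le> p \<Longrightarrow> w l < 1" and "0 \<le> c"
  shows "(SUP n. ennreal (c * moment_iter w n p)) = ennreal (c * moment_limit w p)"
proof -
  have "incseq (\<lambda>n. ennreal (c * moment_iter w n p))"
    using incseq_moment_iter[where w=w, OF assms(1,2)] \<open>0 \<le> c\<close> unfolding incseq_def
    by (intro allI impI ennreal_leI mult_left_mono) auto
  then have "(\<lambda>n. ennreal (c * moment_iter w n p)) \<longlonglongrightarrow> (SUP n. ennreal (c * moment_iter w n p))"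
    by (rule LIMSEQ_SUP)
  moreover have "(\<lambda>n. ennreal (c * moment_iter w n p)) \<longlonglongrightarrow> ennreal (c * moment_limit w p)"
    by (intro tendsto_ennrealI tendsto_mult_left moment_iter_tendsto[where w=w, OF assms(1-3)]) auto
  ultimately show ?thesis using LIMSEQ_unique by blast
qed

lemma eventually_weights_less_one:
  fixes w :: "real \<Rightarrow> nat \<Rightarrow> real" and c :: "nat \<Rightarrow> real"
  assumes expansion: "\<And>l. ((\<lambda>h. (1 - w h l) / h^2) \<longlongrightarrow> c l) (at_right 0)"
    and c_pos: "\<And>l. 1 \<le> l \<Longrightarrow> l \<le> p \<Longrightarrow> 0 < c l"
  shows "eventually (\<lambda>h. \<forall>l\<in>{1..p}. w h l < 1) (at_right 0)"
proof (rule eventually_ball_finite)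
  show "\<forall>l\<in>{1..p}. eventually (\<lambda>h. w h l < 1) (at_right 0)"
  proof
    fix l assume "l \<in> {1..p}"
    then have "eventually (\<lambda>h. 0 < (1 - w h l) / h^2) (at_right 0)"
      using c_pos by (intro order_tendstoD(1)[OF expansion]) auto
    moreover have "eventually (\<lambda>h::real. 0 < h) (at_right 0)"
      by (simp add: eventually_at_filter)
    ultimately show "eventually (\<lambda>h. w h l < 1) (at_right 0)"
      by eventually_elim (auto simp: zero_less_divide_iff)
  qed
qed simp

lemma scaled_moment_limit_eq:
  assumes "w 0 = 1" "\<And>l. 0 \<le> w l" "\<And>l. 1 \<le> l \<Longrightarrow> l \<le> p \<Longrightarrow> w l < 1" and j: "1 \<le> j" "j \<le> p"
  shows "h^(2*j) * moment_limit w j = h^2 / (1 - w j) *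
    (\<Sum>l<j. real (j choose l) * w l * h^(2*(j-1-l)) * (h^(2*l) * moment_limit w l))"
proof -
  have "w j < 1" using assms(3) j .
  then have "moment_limit w j = (\<Sum>l<j. real (j choose l) * w l * moment_limit w l) / (1 - w j)"
    using moment_limit_eq[where w=w, OF assms(1-3) j(2)] by (simp add: field_simps)
  then have "h^(2*j) * moment_limit w j =
      (\<Sum>l<j. h^(2*j) * (real (j choose l) * w l * moment_limit w l)) / (1 - w j)"
    by (simp add: sum_distrib_left)
  also have "\<dots> = (\<Sum>l<j. h^2 * (real (j choose l) * w l * h^(2*(j-1-l)) * (h^(2*l) * moment_limit w l))) / (1 - w j)"
  proof (intro arg_cong2[where f="(/)"] sum.cong refl)
    fix l assume "l \<in> {..<j}"
    then have "2*j = 2 + 2*(j-1-l) + 2*l" by auto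
    then have "h^(2*j) = h^2 * h^(2*(j-1-l)) * h^(2*l)" by (metis power_add)
    then show "h^(2*j) * (real (j choose l) * w l * moment_limit w l) =
        h^2 * (real (j choose l) * w l * h^(2*(j-1-l)) * (h^(2*l) * moment_limit w l))"
      by (simp add: mult_ac)
  qed
  finally show ?thesis by (simp add: sum_distrib_left[symmetric])
qed

lemma scaled_moment_limit_tendsto:
  fixes w :: "real \<Rightarrow> nat \<Rightarrow> real" and c :: "nat \<Rightarrow> real"
  assumes w0: "\<And>h. w h 0 = 1" and nonneg: "\<And>h l. 0 \<le> w h l"
    and expansion: "\<And>l. ((\<lambda>h. (1 - w h l) / h^2) \<longlongrightarrow> c l) (at_right 0)"
    and c_pos: "\<And>l. 1 \<le> l \<Longrightarrow> l \<le> p \<Longrightarrow> 0 < c l"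
  shows "j \<le> p \<Longrightarrow>
    ((\<lambda>h. h^(2*j) * moment_limit (w h) j) \<longlongrightarrow> (\<Prod>k=1..j. real k / c k)) (at_right 0)"
proof (induction j rule: less_induct)
  case (less j)
  show ?case
  proof (cases j)
    case 0
    then show ?thesis by (simp add: moment_limit_def moment_iter_0_right w0)
  next
    case (Suc i)
    have pos_right: "eventually (\<lambda>h::real. 0 < h) (at_right 0)"
      by (simp add: eventually_at_filter)
    have w_tendsto: "((\<lambda>h. w h l) \<longlongrightarrow> 1) (at_right 0)" for l
    proof -
      have "((\<lambda>h. 1 - h^2 * ((1 - w h l) / h^2)) \<longlongrightarrow> 1 - 0^2 * c l) (at_right 0)"
        by (intro tendsto_intros expansion)
      moreover have "eventually (\<lambda>h. 1 - h^2 * ((1 - w h l) / h^2) = w h l) (at_right 0)"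
        using pos_right by eventually_elim simp
      ultimately show ?thesis using tendsto_cong by force
    qed
    have "eventually (\<lambda>h. \<forall>l\<in>{1..p}. w h l < 1) (at_right 0)"
      using expansion c_pos by (rule eventually_weights_less_one)
    then have recurrence: "eventually (\<lambda>h. h^(2*j) * moment_limit (w h) j = h^2 / (1 - w h j) *
       (\<Sum>l<j. real (j choose l) * w h l * h^(2*(j-1-l)) * (h^(2*l) * moment_limit (w h) l))) (at_right 0)"
      by eventually_elim (rule scaled_moment_limit_eq[where p=p], use w0 nonneg less Suc in auto)
    have "((\<lambda>h. 1 / ((1 - w h j) / h^2)) \<longlongrightarrow> 1 / c j) (at_right 0)"
      using c_pos[of j] less Suc by (intro tendsto_divide tendsto_const expansion) auto
    then have factor_tendsto: "((\<lambda>h. h^2 / (1 - w h j)) \<longlongrightarrow> 1 / c j) (at_right 0)"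
      by simp
    text \<open>Only the summand \<open>l = j - 1\<close> survives, the others carry a positive power of \<open>h\<close>.\<close>
    have "((\<lambda>h. \<Sum>l<j. real (j choose l) * w h l * h^(2*(j-1-l)) * (h^(2*l) * moment_limit (w h) l))
        \<longlongrightarrow> (\<Sum>l<j. real (j choose l) * 1 * 0^(2*(j-1-l)) * (\<Prod>k=1..l. real k / c k))) (at_right 0)"
      using less by (intro tendsto_intros w_tendsto less.IH) auto
    then have sum_tendsto: "((\<lambda>h. \<Sum>l<j. real (j choose l) * w h l * h^(2*(j-1-l)) * (h^(2*l) * moment_limit (w h) l))
        \<longlongrightarrow> real j * (\<Prod>k=1..i. real k / c k)) (at_right 0)"
      unfolding Suc by (simp add: lessThan_Suc power_0_left)
    have "1 / c j * (real j * (\<Prod>k=1..i. real k / c k)) = (\<Prod>k=1..j. real k / c k)"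
      unfolding Suc by (simp add: field_simps)
    then show ?thesis
      using tendsto_mult[OF factor_tendsto sum_tendsto] tendsto_cong[OF recurrence] by simp
  qed
qed

definition walk_weight :: "real \<Rightarrow> real \<Rightarrow> nat \<Rightarrow> real" where
  "walk_weight h q l = q ^ l * cosh (real l * h)"

lemma walk_weight_0 [simp]: "walk_weight h q 0 = 1"
  by (simp add: walk_weight_def)

lemma walk_weight_nonneg: "0 \<le> q \<Longrightarrow> 0 \<le> walk_weight h q l"
  by (simp add: walk_weight_def cosh_real_nonneg)

lemma walk_weight_expansion:
  "((\<lambda>h. (1 - walk_weight h (exp (-\<nu> * h^2)) l) / h^2) \<longlongrightarrow> real l * \<nu> - real l * real l / 2) (at_right 0)"
proof -
  have "walk_weight h (exp (-\<nu> * h^2)) l = exp (-(real l * \<nu>) * h^2) * cosh (real l * h)" for h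
    by (simp add: walk_weight_def exp_of_nat_mult[symmetric] mult_ac)
  moreover have "((\<lambda>h. (1 - exp (-(real l * \<nu>) * h^2) * cosh (real l * h)) / h^2)
      \<longlongrightarrow> real l * \<nu> - real l * real l / 2) (at_right 0)"
    by real_asymp
  ultimately show ?thesis by simp
qed

lemma walk_weight_expansion_pos:
  assumes "real p / 2 < \<nu>" "1 \<le> l" "l \<le> p"
  shows "0 < real l * \<nu> - real l * real l / 2"
proof -
  have "0 < real l * (\<nu> - real l / 2)" using assms by (intro mult_pos_pos) auto
  then show ?thesis by (simp add: algebra_simps)
qed

lemma eventually_walk_weight_less_one:
  assumes "real p / 2 < \<nu>"
  shows "eventually (\<lambda>h. \<forall>l\<in>{1..p}. walk_weight h (exp (-\<nu> * h^2)) l < 1) (at_right 0)"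
  using walk_weight_expansion walk_weight_expansion_pos[OF assms]
  by (rule eventually_weights_less_one)

corollary scaled_walk_moment_tendsto:
  assumes "real p / 2 < \<nu>"
  shows "((\<lambda>h. h^(2*p) * moment_limit (walk_weight h (exp (-\<nu> * h^2))) p)
    \<longlongrightarrow> 1 / (\<Prod>k=1..p. (\<nu> - real k / 2))) (at_right 0)"
proof -
  have "((\<lambda>h. h^(2*p) * moment_limit (walk_weight h (exp (-\<nu> * h^2))) p)
      \<longlongrightarrow> (\<Prod>k=1..p. real k / (real k * \<nu> - real k * real k / 2))) (at_right 0)"
    by (rule scaled_moment_limit_tendsto[where w="\<lambda>h. walk_weight h (exp (-\<nu> * h^2))",
          OF walk_weight_0 walk_weight_nonneg[OF exp_ge_zero] walk_weight_expansion
             walk_weight_expansion_pos[OF assms] order.refl])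
  moreover have "(\<Prod>k=1..p. real k / (real k * \<nu> - real k * real k / 2)) = 1 / (\<Prod>k=1..p. (\<nu> - real k / 2))"
  proof -
    have "real k / (real k * \<nu> - real k * real k / 2) = 1 / (\<nu> - real k / 2)" if "1 \<le> k" for k
    proof -
      have "real k * \<nu> - real k * real k / 2 = real k * (\<nu> - real k / 2)" by (simp add: algebra_simps)
      then show ?thesis using that by simp
    qed
    then have "(\<Prod>k=1..p. real k / (real k * \<nu> - real k * real k / 2)) = (\<Prod>k=1..p. 1 / (\<nu> - real k / 2))"
      by (intro prod.cong) auto
    then show ?thesis by (simp add: prod_dividef)
  qed
  ultimately show ?thesis by simp
qed

definition discounted_walk_sum ::
    "real \<Rightarrow> real \<Rightarrow> (nat \<Rightarrow> 'a \<Rightarrow> real) \<Rightarrow> nat \<Rightarrow> nat \<Rightarrow> 'a \<Rightarrow> real" where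
  "discounted_walk_sum h q X n s \<omega> = (\<Sum>k<n. exp (h * (\<Sum>i<k. X (s + i) \<omega>)) * q ^ k)"

lemma discounted_walk_sum_nonneg: "0 \<le> q \<Longrightarrow> 0 \<le> discounted_walk_sum h q X n s \<omega>"
  unfolding discounted_walk_sum_def by (intro sum_nonneg) auto

lemma discounted_walk_sum_le_Suc:
  "0 \<le> q \<Longrightarrow> discounted_walk_sum h q X n s \<omega> \<le> discounted_walk_sum h q X (Suc n) s \<omega>"
  unfolding discounted_walk_sum_def by simp

lemma discounted_walk_sum_Suc:
  "discounted_walk_sum h q X (Suc n) s \<omega> = 1 + q * exp (h * X s \<omega>) * discounted_walk_sum h q X n (Suc s) \<omega>"
proof -
  have "discounted_walk_sum h q X (Suc n) s \<omega>
      = 1 + (\<Sum>k<n. exp (h * (\<Sum>i<Suc k. X (s + i) \<omega>)) * q ^ Suc k)"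
    unfolding discounted_walk_sum_def by (subst sum.lessThan_Suc_shift) simp
  also have "(\<Sum>k<n. exp (h * (\<Sum>i<Suc k. X (s + i) \<omega>)) * q ^ Suc k)
      = (\<Sum>k<n. q * exp (h * X s \<omega>) * (exp (h * (\<Sum>i<k. X (Suc s + i) \<omega>)) * q ^ k))"
  proof (intro sum.cong refl)
    fix k
    have "(\<Sum>i<Suc k. X (s + i) \<omega>) = X s \<omega> + (\<Sum>i<k. X (Suc s + i) \<omega>)"
      by (subst sum.lessThan_Suc_shift) simp
    then show "exp (h * (\<Sum>i<Suc k. X (s + i) \<omega>)) * q ^ Suc k
        = q * exp (h * X s \<omega>) * (exp (h * (\<Sum>i<k. X (Suc s + i) \<omega>)) * q ^ k)"
      by (simp add: distrib_left exp_add mult_ac)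
  qed
  finally show ?thesis
    unfolding discounted_walk_sum_def by (simp only: sum_distrib_left)
qed

lemma discounted_walk_sum_Suc_power:
  "discounted_walk_sum h q X (Suc n) s \<omega> ^ j = (\<Sum>l\<le>j. real (j choose l) * q ^ l *
     (exp (real l * h * X s \<omega>) * discounted_walk_sum h q X n (Suc s) \<omega> ^ l))"
proof -
  have "exp (real l * h * X s \<omega>) = exp (h * X s \<omega>) ^ l" for l
    by (simp add: exp_of_nat_mult[symmetric] mult_ac)
  then show ?thesis
    unfolding discounted_walk_sum_Suc
    by (subst add.commute, subst binomial_ring) (simp add: power_mult_distrib mult_ac)
qed

lemma SUP_power_ennreal:
  fixes f :: "nat \<Rightarrow> ennreal"
  assumes inc: "incseq f"
  shows "(SUP n. f n) ^ p = (SUP n. f n ^ p)"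
proof (induction p)
  case (Suc p)
  have "(SUP n. f n) ^ Suc p = (SUP i. SUP j. f i * f j ^ p)"
    by (simp add: Suc SUP_mult_left_ennreal SUP_mult_right_ennreal) (rule SUP_commute)
  also have "\<dots> = (SUP n. f n ^ Suc p)"
  proof (rule antisym)
    show "(SUP i. SUP j. f i * f j ^ p) \<le> (SUP n. f n ^ Suc p)"
    proof (intro SUP_least)
      fix i j
      have "f i * f j ^ p \<le> f (max i j) * f (max i j) ^ p"
        using inc by (intro mult_mono power_mono_ennreal) (auto simp: incseq_def)
      also have "\<dots> = f (max i j) ^ Suc p" by simp
      also have "\<dots> \<le> (SUP n. f n ^ Suc p)" by (rule SUP_upper) simp
      finally show "f i * f j ^ p \<le> (SUP n. f n ^ Suc p)" .
    qed
    show "(SUP n. f n ^ Suc p) \<le> (SUP i. SUP j. f i * f j ^ p)"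
    proof (intro SUP_least)
      fix n
      have "f n ^ Suc p \<le> (SUP j. f n * f j ^ p)" by (rule SUP_upper2[of n]) simp_all
      also have "\<dots> \<le> (SUP i. SUP j. f i * f j ^ p)" by (rule SUP_upper) simp
      finally show "f n ^ Suc p \<le> (SUP i. SUP j. f i * f j ^ p)" .
    qed
  qed
  finally show ?case .
qed simp

locale rademacher_increments = prob_space M for M :: "'a measure" +
  fixes X :: "nat \<Rightarrow> 'a \<Rightarrow> real"
  assumes measurable_increment [measurable]: "\<And>k. X k \<in> borel_measurable M"
    and indep_increments: "indep_vars (\<lambda>_. borel) X UNIV"
    and prob_plus: "\<And>k. prob {\<omega> \<in> space M. X k \<omega> = 1} = 1/2"
    and prob_minus: "\<And>k. prob {\<omega> \<in> space M. X k \<omega> = -1} = 1/2"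
begin

lemma nn_integral_increment:
  assumes [measurable]: "f \<in> borel_measurable borel" and nonneg: "\<And>x. 0 \<le> f x"
  shows "(\<integral>\<^sup>+\<omega>. ennreal (f (X k \<omega>)) \<partial>M) = ennreal ((f 1 + f (-1)) / 2)"
proof -
  define A where "A = {\<omega> \<in> space M. X k \<omega> = 1}"
  define B where "B = {\<omega> \<in> space M. X k \<omega> = -1}"
  have [measurable]: "A \<in> sets M" "B \<in> sets M" unfolding A_def B_def by measurable
  have "prob (A \<union> B) = prob A + prob B"
    by (rule finite_measure_Union) (auto simp: A_def B_def)
  also have "\<dots> = 1" unfolding A_def B_def by (simp add: prob_plus prob_minus)
  finally have "AE \<omega> in M. \<omega> \<in> A \<union> B" by (rule AE_prob_1)
  then have "(\<integral>\<^sup>+\<omega>. ennreal (f (X k \<omega>)) \<partial>M)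
      = (\<integral>\<^sup>+\<omega>. ennreal (f 1) * indicator A \<omega> + ennreal (f (-1)) * indicator B \<omega> \<partial>M)"
    by (rule nn_integral_cong_AE[OF AE_mp]) (auto simp: A_def B_def indicator_def)
  also have "\<dots> = ennreal (f 1) * emeasure M A + ennreal (f (-1)) * emeasure M B"
    by (simp add: nn_integral_add nn_integral_cmult_indicator)
  also have "\<dots> = ennreal ((f 1 + f (-1)) / 2)"
    unfolding emeasure_eq_measure A_def B_def prob_plus prob_minus using nonneg
    by (simp add: add_divide_distrib divide_ennreal[symmetric] divide_ennreal_def)
  finally show ?thesis .
qed

lemma nn_integral_increment_mult_tail:
  assumes f: "f \<in> borel_measurable borel" "\<And>x. 0 \<le> f x"
    and G: "G \<in> borel_measurable (PiM UNIV (\<lambda>_. borel))" "\<And>x. 0 \<le> G x"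
  shows "(\<integral>\<^sup>+\<omega>. ennreal (f (X s \<omega>) * G (\<lambda>i. X (Suc s + i) \<omega>)) \<partial>M) =
    (\<integral>\<^sup>+\<omega>. ennreal (f (X s \<omega>)) \<partial>M) * (\<integral>\<^sup>+\<omega>. ennreal (G (\<lambda>i. X (Suc s + i) \<omega>)) \<partial>M)"
proof -
  note [measurable] = f(1) G(1)
  define F1 where "F1 = (\<lambda>\<omega>. ennreal (f (X s \<omega>)))"
  define F2 where "F2 = (\<lambda>\<omega>. ennreal (G (\<lambda>i. X (Suc s + i) \<omega>)))"
  have restricted: "indep_var (PiM {s} (\<lambda>_. borel)) (\<lambda>\<omega>. restrict (\<lambda>i. X i \<omega>) {s})
      (PiM {Suc s..} (\<lambda>_. borel)) (\<lambda>\<omega>. restrict (\<lambda>i. X i \<omega>) {Suc s..})"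
    by (rule indep_var_restrict[OF indep_increments]) auto
  have head: "(\<lambda>x. ennreal (f (x s))) \<in> borel_measurable (PiM {s} (\<lambda>_. borel))"
    by measurable
  have shift: "(\<lambda>x i. x (Suc s + i)) \<in> measurable (PiM {Suc s..} (\<lambda>_. borel)) (PiM UNIV (\<lambda>_. borel::real measure))"
    by (rule measurable_PiM_single') (auto simp: measurable_component_singleton)
  have tail: "(\<lambda>x. ennreal (G (\<lambda>i. x (Suc s + i)))) \<in> borel_measurable (PiM {Suc s..} (\<lambda>_. borel))"
    using measurable_comp[OF shift G(1)] by (simp add: comp_def)
  have borel_pair: "case_bool borel borel = (\<lambda>_::bool. borel)"
    by (rule ext) (simp split: bool.split)
  have "indep_var borel F1 borel F2"
    using indep_var_compose[OF restricted head tail] by (simp add: comp_def F1_def F2_def)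
  then have "indep_vars (\<lambda>_. borel) (case_bool F1 F2) UNIV"
    unfolding indep_var_def borel_pair .
  then have "(\<integral>\<^sup>+\<omega>. (\<Prod>b\<in>UNIV. case_bool F1 F2 b \<omega>) \<partial>M) = (\<Prod>b\<in>UNIV. \<integral>\<^sup>+\<omega>. case_bool F1 F2 b \<omega> \<partial>M)"
    using indep_vars_nn_integral[of UNIV "case_bool F1 F2"] by auto
  then show ?thesis
    using f(2) G(2) by (simp add: UNIV_bool mult.commute F1_def F2_def ennreal_mult)
qed

lemma nn_integral_discounted_walk_sum_power:
  "0 \<le> q \<Longrightarrow> (\<integral>\<^sup>+\<omega>. ennreal (discounted_walk_sum h q X n s \<omega> ^ j) \<partial>M)
    = ennreal (moment_iter (walk_weight h q) n j)"
proof (induction n arbitrary: s j)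
  case 0
  then show ?case by (simp add: discounted_walk_sum_def emeasure_space_1)
next
  case (Suc n)
  have [measurable]: "(\<lambda>\<omega>. discounted_walk_sum h q X n s' \<omega>) \<in> borel_measurable M" for s'
    unfolding discounted_walk_sum_def by measurable
  define tail where "tail l y = (\<Sum>k<n. exp (h * (\<Sum>i<k. y i)) * q ^ k) ^ l" for l and y :: "nat \<Rightarrow> real"
  have tail_eq: "tail l (\<lambda>i. X (Suc s + i) \<omega>) = discounted_walk_sum h q X n (Suc s) \<omega> ^ l" for l \<omega>
    unfolding tail_def discounted_walk_sum_def ..
  have factor: "(\<integral>\<^sup>+\<omega>. ennreal (exp (real l * h * X s \<omega>) * discounted_walk_sum h q X n (Suc s) \<omega> ^ l) \<partial>M)
      = ennreal (cosh (real l * h)) * ennreal (moment_iter (walk_weight h q) n l)" for l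
  proof -
    have [measurable]: "tail l \<in> borel_measurable (PiM UNIV (\<lambda>_. borel))"
      unfolding tail_def by measurable
    have "0 \<le> tail l y" for y
      unfolding tail_def using Suc.prems by (auto intro!: sum_nonneg zero_le_power)
    then have "(\<integral>\<^sup>+\<omega>. ennreal (exp (real l * h * X s \<omega>) * tail l (\<lambda>i. X (Suc s + i) \<omega>)) \<partial>M)
        = (\<integral>\<^sup>+\<omega>. ennreal (exp (real l * h * X s \<omega>)) \<partial>M) * (\<integral>\<^sup>+\<omega>. ennreal (tail l (\<lambda>i. X (Suc s + i) \<omega>)) \<partial>M)"
      by (intro nn_integral_increment_mult_tail[where f="\<lambda>x. exp (real l * h * x)"]) auto
    also have "\<dots> = ennreal (cosh (real l * h)) * ennreal (moment_iter (walk_weight h q) n l)"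
      unfolding tail_eq Suc.IH[OF Suc.prems] by (subst nn_integral_increment) (auto simp: cosh_field_def)
    finally show ?thesis unfolding tail_eq .
  qed
  have "(\<integral>\<^sup>+\<omega>. ennreal (discounted_walk_sum h q X (Suc n) s \<omega> ^ j) \<partial>M) =
      (\<integral>\<^sup>+\<omega>. (\<Sum>l\<le>j. ennreal (real (j choose l) * q ^ l) *
        ennreal (exp (real l * h * X s \<omega>) * discounted_walk_sum h q X n (Suc s) \<omega> ^ l)) \<partial>M)"
    unfolding discounted_walk_sum_Suc_power using Suc.prems discounted_walk_sum_nonneg[OF Suc.prems]
    by (intro nn_integral_cong, subst sum_ennreal[symmetric])
      (auto simp: ennreal_mult'[symmetric] mult.assoc intro!: mult_nonneg_nonneg zero_le_power)
  also have "\<dots> = (\<Sum>l\<le>j. ennreal (real (j choose l) * q ^ l) *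
      (\<integral>\<^sup>+\<omega>. ennreal (exp (real l * h * X s \<omega>) * discounted_walk_sum h q X n (Suc s) \<omega> ^ l) \<partial>M))"
    by (simp add: nn_integral_sum nn_integral_cmult)
  also have "\<dots> = ennreal (moment_iter (walk_weight h q) (Suc n) j)"
  proof -
    have "0 \<le> moment_iter (walk_weight h q) n l" for l
      by (rule moment_iter_nonneg) (rule walk_weight_nonneg[OF Suc.prems])
    then show ?thesis
      unfolding factor using Suc.prems
      by (simp add: ennreal_mult'[symmetric] walk_weight_def mult_ac sum_nonneg)
  qed
  finally show ?case .
qed

lemma nn_integral_discounted_series_power:
  assumes "0 \<le> q" "0 \<le> c"
  shows "(\<integral>\<^sup>+\<omega>. (\<Sum>k. ennreal (c * (exp (h * (\<Sum>i<k. X i \<omega>)) * q ^ k))) ^ p \<partial>M) =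
    (SUP n. ennreal (c ^ p * moment_iter (walk_weight h q) n p))"
proof -
  let ?F = "\<lambda>n \<omega>. ennreal (c * discounted_walk_sum h q X n 0 \<omega>)"
  have [measurable]: "(\<lambda>\<omega>. discounted_walk_sum h q X n 0 \<omega>) \<in> borel_measurable M" for n
    unfolding discounted_walk_sum_def by measurable
  have inc: "incseq (\<lambda>n. ?F n \<omega>)" for \<omega>
    using assms by (intro incseq_SucI ennreal_leI mult_left_mono discounted_walk_sum_le_Suc) auto
  have "(\<Sum>k. ennreal (c * (exp (h * (\<Sum>i<k. X i \<omega>)) * q ^ k))) = (SUP n. ?F n \<omega>)" for \<omega>
    unfolding suminf_eq_SUP discounted_walk_sum_def using assms
    by (subst sum_ennreal) (auto simp: sum_distrib_left)
  then have "(\<integral>\<^sup>+\<omega>. (\<Sum>k. ennreal (c * (exp (h * (\<Sum>i<k. X i \<omega>)) * q ^ k))) ^ p \<partial>M)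
      = (\<integral>\<^sup>+\<omega>. (SUP n. ?F n \<omega> ^ p) \<partial>M)"
    by (simp add: SUP_power_ennreal[OF inc])
  also have "\<dots> = (SUP n. \<integral>\<^sup>+\<omega>. ?F n \<omega> ^ p \<partial>M)"
    using inc by (intro nn_integral_monotone_convergence_SUP)
      (auto simp: incseq_def le_fun_def intro!: power_mono_ennreal)
  also have "\<dots> = (SUP n. ennreal (c ^ p * moment_iter (walk_weight h q) n p))"
  proof (intro SUP_cong refl)
    fix n
    have integrand: "?F n \<omega> ^ p = ennreal (c ^ p) * ennreal (discounted_walk_sum h q X n 0 \<omega> ^ p)" for \<omega>
    proof -
      have nonneg: "0 \<le> discounted_walk_sum h q X n 0 \<omega>"
        by (rule discounted_walk_sum_nonneg[OF assms(1)])
      then have "?F n \<omega> ^ p = ennreal ((c * discounted_walk_sum h q X n 0 \<omega>) ^ p)"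
        using assms by (intro ennreal_power) simp
      also have "\<dots> = ennreal (c ^ p) * ennreal (discounted_walk_sum h q X n 0 \<omega> ^ p)"
        unfolding power_mult_distrib using assms nonneg by (intro ennreal_mult) simp_all
      finally show ?thesis .
    qed
    have "(\<integral>\<^sup>+\<omega>. ?F n \<omega> ^ p \<partial>M)
        = ennreal (c ^ p) * (\<integral>\<^sup>+\<omega>. ennreal (discounted_walk_sum h q X n 0 \<omega> ^ p) \<partial>M)"
      unfolding integrand by (rule nn_integral_cmult) measurable
    also have "\<dots> = ennreal (c ^ p * moment_iter (walk_weight h q) n p)"
      unfolding nn_integral_discounted_walk_sum_power[OF assms(1)]
      using assms moment_iter_nonneg[where w="walk_weight h q", OF walk_weight_nonneg[OF assms(1)]]
      by (intro ennreal_mult[symmetric]) simp_all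
    finally show "(\<integral>\<^sup>+\<omega>. ?F n \<omega> ^ p \<partial>M) = ennreal (c ^ p * moment_iter (walk_weight h q) n p)" .
  qed
  finally show ?thesis .
qed

end

lemma Ysum_eq_discounted_series:
  assumes h: "h = 2 powr - real m"
  shows "Ysum \<nu> m X \<omega> = (\<Sum>k. ennreal (h^2 * (exp (h * (\<Sum>i<k. X i \<omega>)) * exp (-\<nu> * h^2) ^ k)))"
proof -
  have "2 powr (-2 * real m) = h^2"
    unfolding h by (simp add: power2_eq_square powr_add[symmetric])
  moreover have "exp (-\<nu> * h^2) ^ k = exp (real k * (-\<nu> * h^2))" for k
    by (rule exp_of_nat_mult[symmetric])
  ultimately show ?thesis
    unfolding Ysum_def walk_def h[symmetric] by (simp add: exp_add[symmetric] algebra_simps)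
qed

lemma filterlim_two_powr_neg_at_right: "filterlim (\<lambda>m::nat. 2 powr - real m) (at_right 0) sequentially"
proof (rule tendsto_imp_filterlim_at_right)
  have "(\<lambda>m::nat. 2 powr - real m) = (\<lambda>m. inverse (2 ^ m))"
    by (simp add: powr_minus powr_realpow)
  then show "((\<lambda>m::nat. 2 powr - real m) \<longlongrightarrow> 0) sequentially"
    using LIMSEQ_inverse_realpow_zero[of 2] by simp
qed simp

theorem lemma2:
  fixes \<nu> :: real and p :: nat
    and M :: "nat \<Rightarrow> 'a measure"
    and X :: "nat \<Rightarrow> nat \<Rightarrow> 'a \<Rightarrow> real"
  assumes nu_pos: "\<nu> > 0"
    and p_pos: "p \<ge> 1"
    and p_nu: "real p / 2 < \<nu>"
    and prob: "\<And>m. prob_space (M m)"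
    and meas: "\<And>m k. X m k \<in> borel_measurable (M m)"
    and indep: "\<And>m. prob_space.indep_vars (M m) (\<lambda>_. borel) (X m) UNIV"
    and plus: "\<And>m k. measure (M m) {\<omega> \<in> space (M m). X m k \<omega> = 1} = 1/2"
    and minus: "\<And>m k. measure (M m) {\<omega> \<in> space (M m). X m k \<omega> = -1} = 1/2"
  shows "(\<lambda>m. \<integral>\<^sup>+ \<omega>. (Ysum \<nu> m (X m) \<omega>) ^ p \<partial>(M m))
           \<longlonglongrightarrow> ennreal (1 / (\<Prod>k=1..p. (\<nu> - real k / 2)))
       \<and> (\<Prod>k=1..p. (\<nu> - real k / 2)) > 0"
proof
  define h where "h m = 2 powr - real m" for m :: nat
  define w where "w m = walk_weight (h m) (exp (-\<nu> * (h m)^2))" for m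
  have h_tendsto: "filterlim h (at_right 0) sequentially"
    unfolding h_def by (rule filterlim_two_powr_neg_at_right)
  have "eventually (\<lambda>m. \<forall>l\<in>{1..p}. w m l < 1) sequentially"
    using filterlim_iff h_tendsto eventually_walk_weight_less_one[OF p_nu] unfolding w_def by blast
  then have "eventually (\<lambda>m. (\<integral>\<^sup>+\<omega>. Ysum \<nu> m (X m) \<omega> ^ p \<partial>M m)
      = ennreal ((h m)^(2*p) * moment_limit (w m) p)) sequentially"
  proof eventually_elim
    case (elim m)
    interpret rademacher_increments "M m" "X m"
      by (intro rademacher_increments.intro rademacher_increments_axioms.intro prob meas indep plus minus)
    have "(\<integral>\<^sup>+\<omega>. Ysum \<nu> m (X m) \<omega> ^ p \<partial>M m) = (SUP n. ennreal (((h m)^2)^p * moment_iter (w m) n p))"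
      unfolding Ysum_eq_discounted_series[OF h_def] w_def
      by (rule nn_integral_discounted_series_power) simp_all
    also have "\<dots> = ennreal (((h m)^2)^p * moment_limit (w m) p)"
      using elim unfolding w_def by (intro SUP_moment_iter walk_weight_nonneg) auto
    finally show ?case by (simp add: power_mult)
  qed
  moreover have "(\<lambda>m. (h m)^(2*p) * moment_limit (w m) p) \<longlonglongrightarrow> 1 / (\<Prod>k=1..p. (\<nu> - real k / 2))"
    unfolding w_def using filterlim_compose[OF scaled_walk_moment_tendsto[OF p_nu] h_tendsto] .
  ultimately show "(\<lambda>m. \<integral>\<^sup>+ \<omega>. (Ysum \<nu> m (X m) \<omega>) ^ p \<partial>(M m))
      \<longlonglongrightarrow> ennreal (1 / (\<Prod>k=1..p. (\<nu> - real k / 2)))"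
    using tendsto_ennrealI tendsto_cong by fastforce
next
  show "(\<Prod>k=1..p. (\<nu> - real k / 2)) > 0"
    using p_nu by (intro prod_pos) auto
qed

end
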